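(* Let $K>1$ and let $r>0$ satisfy $r=\dfrac{I_1(2Kr)}{I_0(2Kr)}$. Then $$r<\sqrt[4]{1-\frac{1}{K}}.$$
   Context: $I_\nu$ denotes the modified Bessel function of the first kind of order $\nu$. The equation $r=I_1(2Kr)/I_0(2Kr)$ is the self-consistency equation for the asymptotic order parameter $r$ of the stochastic Kuramoto model with coupling $K$. *)

theory Defs
  imports "HOL-Analysis.Analysis"
begin

definition besselI :: "nat \<Rightarrow> real \<Rightarrow> real" where
  "besselI n x = (\<Sum>k. (x / 2) ^ (2 * k + n) / (fact k * fact (k + n)))"

end

theory Submission
  imports Defs
begin

text \<open>Squaring the Bessel series and applying Vandermonde's identity expresses \<open>I\<^sub>0(2t)\<^sup>2\<close>,
  \<open>I\<^sub>1(2t)\<^sup>2\<close> and \<open>I\<^sub>0(2t) I\<^sub>1(2t) / t\<close> as \<open>W\<close>, \<open>W - M\<^sub>1\<close> and \<open>2 M\<^sub>1 - M\<^sub>2\<close>, where \<open>W\<close>, \<open>M\<^sub>1\<close>, \<open>M\<^sub>2\<close>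
  are the moments of \<open>a\<^sub>k = 1/(k+1)\<close> with respect to the positive weights
  \<open>w\<^sub>k = t\<^sup>2\<^sup>k (2k)! / k!\<^sup>4\<close>. For \<open>r = I\<^sub>1/I\<^sub>0\<close> and \<open>t = K r\<close> this gives \<open>r\<^sup>2 = 1 - M\<^sub>1/W\<close> and
  \<open>1/K = (2 M\<^sub>1 - M\<^sub>2)/W\<close>, so \<open>r\<^sup>4 < 1 - 1/K\<close> is exactly the strict Cauchy-Schwarz inequality
  \<open>M\<^sub>1\<^sup>2 < W M\<^sub>2\<close>; it is strict because \<open>a\<close> is not constant.\<close>

lemma sum_inverse_fact_products:
  "(\<Sum>i\<le>k. 1 / (fact i * fact (i + m) * fact (k - i) * fact (k - i + n)) :: 'a::field_char_0)
     = fact (2 * k + m + n) / (fact k * fact (k + m) * fact (k + n) * fact (k + m + n))"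
proof -
  let ?N = "k + m + n"
  have summand: "1 / (fact i * fact (i + m) * fact (k - i) * fact (k - i + n))
      = of_nat (k choose i) * of_nat (?N choose (k + n - i)) / (fact k * fact ?N :: 'a)"
    if "i \<le> k" for i
  proof -
    have "k + n - i \<le> ?N" by simp
    then have "(of_nat (?N choose (k + n - i)) :: 'a) = fact ?N / (fact (k + n - i) * fact (?N - (k + n - i)))"
      by (rule binomial_fact)
    moreover have "?N - (k + n - i) = i + m" "k + n - i = k - i + n" using that by simp_all
    ultimately have "(of_nat (?N choose (k + n - i)) :: 'a) = fact ?N / (fact (k - i + n) * fact (i + m))"
      by (simp only:)
    then show ?thesis
      unfolding binomial_fact[OF that] by (simp add: divide_simps ac_simps)
  qed
  have "(\<Sum>i\<le>k. (k choose i) * (?N choose (k + n - i))) = (\<Sum>i\<le>k + n. (k choose i) * (?N choose (k + n - i)))"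
    by (intro sum.mono_neutral_left) auto
  also have "\<dots> = (2 * k + m + n) choose (k + n)"
    using vandermonde[of k ?N "k + n"] by (simp add: mult_2 add.assoc)
  finally have vdm: "(\<Sum>i\<le>k. (k choose i) * (?N choose (k + n - i))) = (2 * k + m + n) choose (k + n)" .
  have "(\<Sum>i\<le>k. 1 / (fact i * fact (i + m) * fact (k - i) * fact (k - i + n)) :: 'a)
      = (\<Sum>i\<le>k. of_nat (k choose i) * of_nat (?N choose (k + n - i)) / (fact k * fact ?N))"
    by (rule sum.cong[OF refl], rule summand) simp
  also have "\<dots> = of_nat (\<Sum>i\<le>k. (k choose i) * (?N choose (k + n - i))) / (fact k * fact ?N)"
    by (simp add: sum_divide_distrib)
  also have "\<dots> = fact (2 * k + m + n) / (fact k * fact (k + m) * fact (k + n) * fact ?N)"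
  proof -
    have "(of_nat ((2 * k + m + n) choose (k + n)) :: 'a)
        = fact (2 * k + m + n) / (fact (k + n) * fact (2 * k + m + n - (k + n)))"
      by (rule binomial_fact) simp
    moreover have "2 * k + m + n - (k + n) = k + m" by simp
    ultimately show ?thesis unfolding vdm by (simp add: divide_simps ac_simps)
  qed
  finally show ?thesis .
qed

lemma summable_norm_besselI_terms:
  "summable (\<lambda>k. norm ((x / 2) ^ (2 * k + n) / (fact k * fact (k + n)) :: real))"
proof (rule summable_comparison_test'[OF summable_mult[OF summable_exp[of "(x / 2)\<^sup>2"]]])
  fix k
  have "norm (norm ((x / 2) ^ (2 * k + n) / (fact k * fact (k + n))))
      = \<bar>x / 2\<bar> ^ (2 * k + n) / (fact k * fact (k + n))"
    by (simp add: power_abs)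
  also have "\<dots> \<le> \<bar>x / 2\<bar> ^ (2 * k + n) / fact k"
    by (rule divide_left_mono) (simp_all add: mult_le_cancel_left1 del: fact_Suc)
  also have "\<dots> = \<bar>x / 2\<bar> ^ n * (inverse (fact k) * ((x / 2)\<^sup>2) ^ k)"
    by (simp only: power_add power_mult power2_abs divide_inverse) (simp only: mult_ac)
  finally show "norm (norm ((x / 2) ^ (2 * k + n) / (fact k * fact (k + n))))
      \<le> \<bar>x / 2\<bar> ^ n * (inverse (fact k) * ((x / 2)\<^sup>2) ^ k)" .
qed

lemma besselI_mult_sums:
  "(\<lambda>k. (x / 2) ^ (2 * k + m + n)
      * (fact (2 * k + m + n) / (fact k * fact (k + m) * fact (k + n) * fact (k + m + n))))
     sums (besselI m x * besselI n x)"
proof -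
  define c where "c l i = (x / 2) ^ (2 * i + l) / (fact i * fact (i + l))" for l i
  have "(\<lambda>k. \<Sum>i\<le>k. c m i * c n (k - i)) sums (besselI m x * besselI n x)"
    using Cauchy_product_sums[OF summable_norm_besselI_terms summable_norm_besselI_terms]
    unfolding c_def besselI_def .
  moreover have "(\<Sum>i\<le>k. c m i * c n (k - i))
      = (x / 2) ^ (2 * k + m + n) * (fact (2 * k + m + n) / (fact k * fact (k + m) * fact (k + n) * fact (k + m + n)))"
    for k
  proof -
    have summand: "c m i * c n (k - i)
        = (x / 2) ^ (2 * k + m + n) * (1 / (fact i * fact (i + m) * fact (k - i) * fact (k - i + n)))"
      if "i \<le> k" for i
    proof -
      have "2 * k + m + n = (2 * i + m) + (2 * (k - i) + n)" using that by simp
      then show ?thesis unfolding c_def by (simp only: power_add) simp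
    qed
    have "(\<Sum>i\<le>k. c m i * c n (k - i))
        = (\<Sum>i\<le>k. (x / 2) ^ (2 * k + m + n) * (1 / (fact i * fact (i + m) * fact (k - i) * fact (k - i + n))))"
      by (rule sum.cong[OF refl], rule summand) simp
    also have "\<dots> = (x / 2) ^ (2 * k + m + n)
        * (\<Sum>i\<le>k. 1 / (fact i * fact (i + m) * fact (k - i) * fact (k - i + n)))"
      by (rule sum_distrib_left[symmetric])
    finally show ?thesis by (simp only: sum_inverse_fact_products)
  qed
  ultimately show ?thesis by simp
qed

lemma besselI_squares_as_moments:
  fixes t :: real
  defines "w \<equiv> \<lambda>k. t ^ (2 * k) * fact (2 * k) / fact k ^ 4"
    and "a \<equiv> \<lambda>k. 1 / (real k + 1)"
  shows "w sums besselI 0 (2 * t) ^ 2"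
    and "(\<lambda>k. w k * (1 - a k)) sums besselI 1 (2 * t) ^ 2"
    and "(\<lambda>k. t * (w k * (2 * a k - a k ^ 2))) sums (besselI 0 (2 * t) * besselI 1 (2 * t))"
proof -
  show "w sums besselI 0 (2 * t) ^ 2"
    using besselI_mult_sums[of "2 * t" 0 0]
    by (simp add: w_def power2_eq_square power4_eq_xxxx mult.assoc)
  have "(\<lambda>k. w (Suc k) * (1 - a (Suc k))) sums (besselI 1 (2 * t) * besselI 1 (2 * t))"
  proof (rule sums_cong[THEN iffD1, OF _ besselI_mult_sums[of "2 * t" 1 1]])
    fix k
    have ratio: "T * (G / (F * (z * F) * (z * F) * ((z + 1) * (z * F))))
        = T * G / (z * F) ^ 4 * (1 - 1 / (z + 1))" if "0 < z" "0 < F" for z F T G :: real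
    proof -
      have "1 - 1 / (z + 1) = z / (z + 1)"
        using that by (simp add: field_simps)
      moreover have "(z * F) ^ 4 = z * (F * (z * F) * (z * F) * (z * F))"
        by (simp add: power4_eq_xxxx mult_ac)
      ultimately show ?thesis
        using that by simp
    qed
    have "2 * t / 2 = t" "2 * Suc k = 2 * k + 1 + 1" "real (Suc k) + 1 = (real k + 1) + 1"
      "fact (k + 1) = (real k + 1) * fact k" "fact (Suc k) = (real k + 1) * fact k"
      "fact (k + 1 + 1) = ((real k + 1) + 1) * ((real k + 1) * fact k)"
      by (simp_all add: algebra_simps)
    then show "(2 * t / 2) ^ (2 * k + 1 + 1)
        * (fact (2 * k + 1 + 1) / (fact k * fact (k + 1) * fact (k + 1) * fact (k + 1 + 1)))
        = w (Suc k) * (1 - a (Suc k))"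
      unfolding w_def a_def by (simp only:) (rule ratio, simp_all)
  qed
  then have "(\<lambda>k. w k * (1 - a k)) sums (besselI 1 (2 * t) * besselI 1 (2 * t) + w 0 * (1 - a 0))"
    by (rule sums_Suc_iff[THEN iffD1])
  then show "(\<lambda>k. w k * (1 - a k)) sums besselI 1 (2 * t) ^ 2"
    by (simp add: a_def power2_eq_square)
  have "(\<lambda>k. t * (w k * (2 * a k - a k ^ 2))) sums (besselI 1 (2 * t) * besselI 0 (2 * t))"
  proof (rule sums_cong[THEN iffD1, OF _ besselI_mult_sums[of "2 * t" 1 0]])
    fix k
    have ratio: "t * T * ((2 * z - 1) * G / (F * (z * F) * F * (z * F)))
        = t * (T * G / F ^ 4 * (2 * (1 / z) - (1 / z)\<^sup>2))" if "0 < z" "0 < F" for z F T G :: real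
    proof -
      have "2 * (1 / z) - (1 / z)\<^sup>2 = (2 * z - 1) / z\<^sup>2"
        using that by (simp add: field_simps power2_eq_square)
      moreover have "F * (z * F) * F * (z * F) = F ^ 4 * z\<^sup>2"
        by (simp add: power4_eq_xxxx power2_eq_square mult_ac)
      ultimately show ?thesis
        by simp
    qed
    have "2 * t / 2 = t" "t ^ (2 * k + 1) = t * t ^ (2 * k)"
      "fact (2 * k + 1) = (2 * (real k + 1) - 1) * fact (2 * k)" "fact (k + 1) = (real k + 1) * fact k"
      by (simp_all add: algebra_simps)
    then show "(2 * t / 2) ^ (2 * k + 1 + 0)
        * (fact (2 * k + 1 + 0) / (fact k * fact (k + 1) * fact (k + 0) * fact (k + 1 + 0)))
        = t * (w k * (2 * a k - a k ^ 2))"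
      unfolding w_def a_def by (simp only: add_0_right) (rule ratio, simp_all)
  qed
  then show "(\<lambda>k. t * (w k * (2 * a k - a k ^ 2))) sums (besselI 0 (2 * t) * besselI 1 (2 * t))"
    by (simp add: mult.commute)
qed

lemma weighted_mean_square_less:
  fixes w a :: "nat \<Rightarrow> real"
  assumes w_nonneg: "\<And>k. 0 \<le> w k"
    and W: "w sums W" and M1: "(\<lambda>k. w k * a k) sums M1" and M2: "(\<lambda>k. w k * (a k)\<^sup>2) sums M2"
    and "0 < w i" "0 < w j" "a i \<noteq> a j"
  shows "M1\<^sup>2 < W * M2"
proof -
  have "0 < W"
    using suminf_pos2[OF sums_summable[OF W] w_nonneg \<open>0 < w i\<close>] W by (simp add: sums_iff)
  define \<mu> where "\<mu> = M1 / W"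
  define g where "g k = w k * (a k - \<mu>)\<^sup>2" for k
  have "(\<lambda>k. w k * (a k)\<^sup>2 - 2 * \<mu> * (w k * a k) + \<mu>\<^sup>2 * w k)
      sums (M2 - 2 * \<mu> * M1 + \<mu>\<^sup>2 * W)"
    by (intro sums_add sums_diff sums_mult W M1 M2)
  then have g_sums: "g sums (M2 - 2 * \<mu> * M1 + \<mu>\<^sup>2 * W)"
    unfolding g_def by (simp add: algebra_simps power2_eq_square)
  obtain l where "0 < w l" "a l \<noteq> \<mu>"
    using \<open>0 < w i\<close> \<open>0 < w j\<close> \<open>a i \<noteq> a j\<close> by metis
  then have "0 < g l"
    unfolding g_def by simp
  then have "0 < M2 - 2 * \<mu> * M1 + \<mu>\<^sup>2 * W"
    using suminf_pos2[OF sums_summable[OF g_sums]] g_sums w_nonneg by (simp add: g_def sums_iff)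
  also have "\<dots> = (W * M2 - M1\<^sup>2) / W"
    unfolding \<mu>_def using \<open>0 < W\<close> by (simp add: field_simps power2_eq_square)
  finally show ?thesis
    using \<open>0 < W\<close> by (simp add: zero_less_divide_iff)
qed

lemma besselI_moment_inequality:
  fixes t :: real
  assumes "t \<noteq> 0"
  defines "I0 \<equiv> besselI 0 (2 * t)" and "I1 \<equiv> besselI 1 (2 * t)"
  shows "(I0\<^sup>2 - I1\<^sup>2)\<^sup>2 < I0\<^sup>2 * (2 * (I0\<^sup>2 - I1\<^sup>2) - I0 * I1 / t)"
proof -
  define w :: "nat \<Rightarrow> real" where "w k = t ^ (2 * k) * fact (2 * k) / fact k ^ 4" for k
  define a :: "nat \<Rightarrow> real" where "a k = 1 / (real k + 1)" for k
  note moments = besselI_squares_as_moments[of t, folded w_def a_def I0_def I1_def]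
  have M1: "(\<lambda>k. w k * a k) sums (I0\<^sup>2 - I1\<^sup>2)"
    using sums_diff[OF moments(1) moments(2)] by (simp add: algebra_simps)
  have "(\<lambda>k. 2 * (w k * a k) - t * (w k * (2 * a k - (a k)\<^sup>2)) / t)
      sums (2 * (I0\<^sup>2 - I1\<^sup>2) - I0 * I1 / t)"
    by (intro sums_diff sums_mult M1 sums_divide moments(3))
  moreover have "2 * (w k * a k) - t * (w k * (2 * a k - (a k)\<^sup>2)) / t = w k * (a k)\<^sup>2" for k
    using \<open>t \<noteq> 0\<close> by (simp add: field_simps)
  ultimately have M2: "(\<lambda>k. w k * (a k)\<^sup>2) sums (2 * (I0\<^sup>2 - I1\<^sup>2) - I0 * I1 / t)"
    by (simp only:)
  show ?thesis
    by (rule weighted_mean_square_less[OF _ moments(1) M1 M2, of 0 1])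
      (use \<open>t \<noteq> 0\<close> in \<open>simp_all add: w_def a_def\<close>)
qed

theorem mainTheorem1:
  fixes K r :: real
  assumes "K > 1" and "r > 0"
    and "r = besselI 1 (2 * K * r) / besselI 0 (2 * K * r)"
  shows "r < root 4 (1 - 1 / K)"
proof -
  define t where "t = K * r"
  define I0 I1 where "I0 = besselI 0 (2 * t)" and "I1 = besselI 1 (2 * t)"
  have r_eq: "r = I1 / I0"
    using assms(3) unfolding t_def I0_def I1_def by (simp add: mult.assoc)
  then have "I0 \<noteq> 0"
    using \<open>0 < r\<close> by auto \<comment> \<open>otherwise \<open>r = I1 / 0 = 0\<close>\<close>
  with r_eq have I1_eq: "I1 = r * I0"
    by simp
  have "t \<noteq> 0"
    using assms unfolding t_def by simp
  then have "(I0\<^sup>2 - I1\<^sup>2)\<^sup>2 < I0\<^sup>2 * (2 * (I0\<^sup>2 - I1\<^sup>2) - I0 * I1 / t)"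
    unfolding I0_def I1_def by (rule besselI_moment_inequality)
  then have "I0 ^ 4 * (1 - r\<^sup>2)\<^sup>2 < I0 ^ 4 * (2 * (1 - r\<^sup>2) - 1 / K)"
    using \<open>0 < r\<close> unfolding I1_eq t_def by (simp add: field_simps power2_eq_square power4_eq_xxxx)
  then have "(1 - r\<^sup>2)\<^sup>2 < 2 * (1 - r\<^sup>2) - 1 / K"
    using \<open>I0 \<noteq> 0\<close> by (simp add: mult_less_cancel_left_pos)
  then have "r ^ 4 < 1 - 1 / K"
    by (simp add: power2_eq_square power4_eq_xxxx algebra_simps)
  then have "root 4 (r ^ 4) < root 4 (1 - 1 / K)"
    by (intro real_root_less_mono) simp_all
  then show ?thesis
    using \<open>0 < r\<close> by (simp add: real_root_power_cancel)
qed

end
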